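(* Consider the reputation-based proportional-share reverse auction with ex-post payments described in the context, with budget $B>0$ and worker set $U$. Let $i\in U$ be a worker who bids truthfully ($b_i=c_i$), is selected (i.e. $i\in S$), and is honest, meaning that his internal reputation in the current task satisfies $re_i\ge Re_i$. Then his utility is nonnegative: $u_i=p_i-c_i\ge 0$.
   Context: Setting. A task publisher with budget $B>0$ faces a finite set $U$ of workers. Each worker $i\in U$ has a public accumulated reputation $Re_i\in(0,1]$, a private cost $c_i\ge 0$, and submits a sealed bid $b_i\ge 0$. After the task, each selected worker $i$ receives an internal reputation $re_i\in[0,1]$ (a performance score for the current task). Mechanism. (1) Sort the workers so that $\frac{b_1}{Re_1}\le\frac{b_2}{Re_2}\le\dots\le\frac{b_{|U|}}{Re_{|U|}}$ (ties broken arbitrarily). (2) Starting with $S=\emptyset$ and $i=1$, while $i\le |U|$ and $\frac{b_i}{Re_i}\le \frac{B}{Re_i+\sum_{j\in S}Re_j}$, set $S=S\cup\{i\}$ and $i=i+1$. Let $k=|S|$, so $S=\{1,\dots,k\}$ is the set of winners. (3) Define the payment density threshold $\rho^*=\min\left(\frac{b_{k+1}}{Re_{k+1}},\frac{B}{\sum_{j\in S}Re_j}\right)$ (with $\frac{b_{k+1}}{Re_{k+1}}:=+\infty$ if $k=|U|$). (4) Every worker $i\notin S$ is paid $p_i=0$. Every winner $i\in S$ has payment upper bound $p_i^{up}=Re_i\,\rho^*$. (5) After the task, each winner $i\in S$ gets temporary reward $p_i'=\max\left(\frac{B\, re_i}{\sum_{j\in S}re_j},\ \rho^*\, re_i\right)$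 and final payment $p_i=\min(p_i^{up},p_i')$. Utility of worker $i$: $u_i=0$ if $i\notin S$ and $u_i=p_i-c_i$ if $i\in S$. *)

theory Defs
  imports Complex_Main
begin

text \<open>The sorting step is an
enumeration sigma :: nat => 'a, a bijection from {..<card U} onto U (0-indexed),
listing workers in nondecreasing order of bid density b/Re (ties arbitrary).\<close>

definition density :: "('a \<Rightarrow> real) \<Rightarrow> ('a \<Rightarrow> real) \<Rightarrow> 'a \<Rightarrow> real" where
  "density b Rp i = b i / Rp i"

definition sorted_enum :: "'a set \<Rightarrow> (nat \<Rightarrow> 'a) \<Rightarrow> ('a \<Rightarrow> real) \<Rightarrow> ('a \<Rightarrow> real) \<Rightarrow> bool" where
  "sorted_enum U \<sigma> b Rp \<longleftrightarrow> bij_betw \<sigma> {..<card U} U \<and>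
     (\<forall>i j. i \<le> j \<longrightarrow> j < card U \<longrightarrow> density b Rp (\<sigma> i) \<le> density b Rp (\<sigma> j))"

text \<open>Greedy admission test for the worker at (0-indexed) position i, given that
positions 0..i-1 have been admitted.\<close>
definition admit :: "real \<Rightarrow> (nat \<Rightarrow> 'a) \<Rightarrow> ('a \<Rightarrow> real) \<Rightarrow> ('a \<Rightarrow> real) \<Rightarrow> nat \<Rightarrow> bool" where
  "admit B \<sigma> b Rp i \<longleftrightarrow>
     density b Rp (\<sigma> i) \<le> B / (Rp (\<sigma> i) + (\<Sum>j<i. Rp (\<sigma> j)))"

text \<open>Number k of winners: the while loop stops at the first position failing the test
or at the end of the list.\<close>
definition num_winners :: "'a set \<Rightarrow> real \<Rightarrow> (nat \<Rightarrow> 'a) \<Rightarrow> ('a \<Rightarrow> real) \<Rightarrow> ('a \<Rightarrow> real) \<Rightarrow> nat" where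
  "num_winners U B \<sigma> b Rp = (LEAST i. i = card U \<or> \<not> admit B \<sigma> b Rp i)"

definition winners :: "'a set \<Rightarrow> real \<Rightarrow> (nat \<Rightarrow> 'a) \<Rightarrow> ('a \<Rightarrow> real) \<Rightarrow> ('a \<Rightarrow> real) \<Rightarrow> 'a set" where
  "winners U B \<sigma> b Rp = \<sigma> ` {..<num_winners U B \<sigma> b Rp}"

text \<open>Payment density threshold rho*; the (k+1)-th worker (1-indexed) is sigma k.\<close>
definition rho_star :: "'a set \<Rightarrow> real \<Rightarrow> (nat \<Rightarrow> 'a) \<Rightarrow> ('a \<Rightarrow> real) \<Rightarrow> ('a \<Rightarrow> real) \<Rightarrow> real" where
  "rho_star U B \<sigma> b Rp =
     (let k = num_winners U B \<sigma> b Rp;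
          S = winners U B \<sigma> b Rp
      in if k = card U then B / (\<Sum>j\<in>S. Rp j)
         else min (density b Rp (\<sigma> k)) (B / (\<Sum>j\<in>S. Rp j)))"

definition pay_up :: "'a set \<Rightarrow> real \<Rightarrow> (nat \<Rightarrow> 'a) \<Rightarrow> ('a \<Rightarrow> real) \<Rightarrow> ('a \<Rightarrow> real) \<Rightarrow> 'a \<Rightarrow> real" where
  "pay_up U B \<sigma> b Rp i = Rp i * rho_star U B \<sigma> b Rp"

definition temp_reward :: "'a set \<Rightarrow> real \<Rightarrow> (nat \<Rightarrow> 'a) \<Rightarrow> ('a \<Rightarrow> real) \<Rightarrow> ('a \<Rightarrow> real) \<Rightarrow> ('a \<Rightarrow> real) \<Rightarrow> 'a \<Rightarrow> real" where
  "temp_reward U B \<sigma> b Rp re i =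
     max (B * re i / (\<Sum>j\<in>winners U B \<sigma> b Rp. re j)) (rho_star U B \<sigma> b Rp * re i)"

definition payment :: "'a set \<Rightarrow> real \<Rightarrow> (nat \<Rightarrow> 'a) \<Rightarrow> ('a \<Rightarrow> real) \<Rightarrow> ('a \<Rightarrow> real) \<Rightarrow> ('a \<Rightarrow> real) \<Rightarrow> 'a \<Rightarrow> real" where
  "payment U B \<sigma> b Rp re i =
     (if i \<in> winners U B \<sigma> b Rp
      then min (pay_up U B \<sigma> b Rp i) (temp_reward U B \<sigma> b Rp re i) else 0)"

definition utility :: "'a set \<Rightarrow> real \<Rightarrow> (nat \<Rightarrow> 'a) \<Rightarrow> ('a \<Rightarrow> real) \<Rightarrow> ('a \<Rightarrow> real) \<Rightarrow> ('a \<Rightarrow> real) \<Rightarrow> ('a \<Rightarrow> real) \<Rightarrow> 'a \<Rightarrow> real" where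
  "utility U B \<sigma> b Rp re c i =
     (if i \<in> winners U B \<sigma> b Rp then payment U B \<sigma> b Rp re i - c i else 0)"

end

theory Submission
  imports Defs
begin

text \<open>Every winner's bid density is at most the threshold \<open>\<rho>*\<close>: it is bounded by the
density of the first loser (if any) by sortedness, and by \<open>B / \<Sum>\<^sub>S Re\<close> because the
last winner passed the admission test, whose right-hand side is exactly that quantity.
Hence a truthful winner's cost \<open>c\<^sub>i = Re\<^sub>i \<cdot> (c\<^sub>i/Re\<^sub>i)\<close> is at most \<open>Re\<^sub>i \<rho>* = p\<^sub>i\<^sup>u\<^sup>p\<close>, and,
for an honest worker (\<open>re\<^sub>i \<ge> Re\<^sub>i\<close>), also at most \<open>\<rho>* re\<^sub>i \<le> p\<^sub>i'\<close>.\<close>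

lemma num_winners_le_card: "num_winners U B \<sigma> b Rp \<le> card U"
  unfolding num_winners_def by (rule Least_le) simp

lemma admit_if_less_num_winners:
  "j < num_winners U B \<sigma> b Rp \<Longrightarrow> admit B \<sigma> b Rp j"
  unfolding num_winners_def using not_less_Least by blast

lemma sum_winners:
  assumes "inj_on \<sigma> {..<card U}"
  shows "(\<Sum>j\<in>winners U B \<sigma> b Rp. f j) = (\<Sum>j<num_winners U B \<sigma> b Rp. f (\<sigma> j))"
proof -
  have "inj_on \<sigma> {..<num_winners U B \<sigma> b Rp}"
    using assms by (rule inj_on_subset) (use num_winners_le_card in auto)
  then show ?thesis unfolding winners_def by (simp add: sum.reindex)
qed

lemma density_last_winner_le:
  assumes "inj_on \<sigma> {..<card U}" and "num_winners U B \<sigma> b Rp = Suc m"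
  shows "density b Rp (\<sigma> m) \<le> B / (\<Sum>j\<in>winners U B \<sigma> b Rp. Rp j)"
proof -
  have "admit B \<sigma> b Rp m"
    using assms(2) admit_if_less_num_winners[of m U B \<sigma> b Rp] by simp
  moreover have "(\<Sum>j\<in>winners U B \<sigma> b Rp. Rp j) = Rp (\<sigma> m) + (\<Sum>j<m. Rp (\<sigma> j))"
    using sum_winners[OF assms(1), where f = Rp] assms(2) by (simp add: add.commute)
  ultimately show ?thesis unfolding admit_def by simp
qed

lemma density_winner_le_rho_star:
  assumes "sorted_enum U \<sigma> b Rp" and "i \<in> winners U B \<sigma> b Rp"
  shows "density b Rp i \<le> rho_star U B \<sigma> b Rp"
proof -
  define k where "k = num_winners U B \<sigma> b Rp"
  have inj: "inj_on \<sigma> {..<card U}"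
    and sorted: "\<And>a d. a \<le> d \<Longrightarrow> d < card U \<Longrightarrow> density b Rp (\<sigma> a) \<le> density b Rp (\<sigma> d)"
    using assms(1) unfolding sorted_enum_def by (auto dest: bij_betw_imp_inj_on)
  have k_le: "k \<le> card U"
    unfolding k_def by (rule num_winners_le_card)
  obtain m where m: "m < k" "i = \<sigma> m"
    using assms(2) unfolding winners_def k_def by auto
  then obtain l where l: "k = Suc l"
    using less_imp_Suc_add by blast
  have "density b Rp i \<le> density b Rp (\<sigma> l)"
    using sorted m k_le l by simp
  also have "\<dots> \<le> B / (\<Sum>j\<in>winners U B \<sigma> b Rp. Rp j)"
    using density_last_winner_le[OF inj] l unfolding k_def by simp
  finally have budget: "density b Rp i \<le> B / (\<Sum>j\<in>winners U B \<sigma> b Rp. Rp j)" .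
  show ?thesis
  proof (cases "k = card U")
    case True
    then show ?thesis using budget unfolding rho_star_def k_def[symmetric] Let_def by simp
  next
    case False
    then have "density b Rp i \<le> density b Rp (\<sigma> k)"
      using sorted m k_le by simp
    then show ?thesis using False budget unfolding rho_star_def k_def[symmetric] Let_def by simp
  qed
qed

lemma bid_le_payment:
  assumes "density b Rp i \<le> rho_star U B \<sigma> b Rp" and "i \<in> winners U B \<sigma> b Rp"
    and "Rp i > 0" and "b i \<ge> 0" and "Rp i \<le> re i"
  shows "b i \<le> payment U B \<sigma> b Rp re i"
proof -
  let ?\<rho> = "rho_star U B \<sigma> b Rp"
  have bid_le_up: "b i \<le> Rp i * ?\<rho>"
    using assms(1,3) unfolding density_def by (simp add: field_simps)
  have "?\<rho> \<ge> 0"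
    using assms(1,3,4) unfolding density_def by (meson divide_nonneg_pos order_trans)
  then have "Rp i * ?\<rho> \<le> ?\<rho> * re i"
    using assms(5) by (simp add: mult.commute mult_right_mono)
  then show ?thesis using bid_le_up assms(2)
    unfolding payment_def pay_up_def temp_reward_def by (simp add: le_max_iff_disj)
qed

theorem theorem1:
  fixes U :: "'a set" and B :: real and \<sigma> :: "nat \<Rightarrow> 'a"
    and b c Rp re :: "'a \<Rightarrow> real" and i :: 'a
  assumes "finite U"
    and "B > 0"
    and "\<forall>j\<in>U. 0 < Rp j \<and> Rp j \<le> 1"
    and "\<forall>j\<in>U. c j \<ge> 0"
    and "\<forall>j\<in>U. b j \<ge> 0"
    and "\<forall>j\<in>U. 0 \<le> re j \<and> re j \<le> 1"
    and "sorted_enum U \<sigma> b Rp"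
    and "i \<in> U"
    and "b i = c i"
    and "i \<in> winners U B \<sigma> b Rp"
    and "re i \<ge> Rp i"
  shows "utility U B \<sigma> b Rp re c i \<ge> 0"
proof -
  have "density b Rp i \<le> rho_star U B \<sigma> b Rp"
    using assms(7,10) by (rule density_winner_le_rho_star)
  moreover have "Rp i > 0" and "b i \<ge> 0"
    using assms(3,5,8) by auto
  ultimately have "c i \<le> payment U B \<sigma> b Rp re i"
    using bid_le_payment assms(9,10,11) by metis
  then show ?thesis
    unfolding utility_def by simp
qed

end
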